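(* Assume $h_0$ satisfies Case I or Case II. Let $\eta_0>0$, $\eta_1\in\mathbb{R}$, and let $\eta$ be the solution of $\eta''=G(\eta,\eta')$, $\eta(0)=\eta_0$, $\eta'(0)=\eta_1$ on its maximal interval $[0,T[$. Let $V_1=\sup_{x\in\Omega}\{-\frac{\partial h_0}{\partial x_1}(x)\}$ and $V_2=\max\{\eta_1+1,V_1\}$. Then $\eta'(t)<V_2$ for all $t\in[0,T[$.
   Context: Let $\Omega\subset\mathbb{R}^2$ be a bounded open set with regular boundary and $0\in\Omega$. Let $h_0\in C^1(\bar\Omega)$ with $h_0\ge 0$ and $\min_{\Omega}h_0=h_0(0)=0$. Let $F>0$, $K=\{\varphi\in H^1_0(\Omega):\varphi\ge 0\}$. For $\beta>0$, $\gamma\in\mathbb{R}$, let $q\in K$ be the unique solution of $\int_\Omega (h_0+\beta)^3\nabla q\cdot\nabla(\varphi-q)\ge \int_\Omega h_0\,\partial_{x_1}(\varphi-q)-\gamma\int_\Omega(\varphi-q)$ for all $\varphi\in K$, and set $G(\beta,\gamma)=\int_\Omega q\,dx-F$ (locally Lipschitz, so the Cauchy problem has a unique maximal $C^2$ solution with $\eta>0$). Case I (line contact): $h_0(0,x_2)=0$ whenever $(0,x_2)\in\Omega$, $h_0(x_1,x_2)>0$ for $x_1\neq0$, and there exist $\alpha\ge1$, a neighborhood $W$ of $0$ and a regular function $h_1>0$ on $\bar W$ with $h_0=|x_1|^\alpha h_1$ on $W$. Case II (point contact): $h_0(x)>0$ for $x\neq0$, and there exist $\alpha\ge1$, a neighborhood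 $W$ of $0$ and a regular $h_1>0$ on $\bar W$ with $h_0(x)=|x|^\alpha h_1(x)$ on $W$. *)

theory Defs
  imports "HOL-Analysis.Analysis"
begin

(* Points of R^2 are of type real^2; x $ 1 is the coordinate x_1, x $ 2 is x_2. *)

definition C1c :: "(real^2 \<Rightarrow> real) \<Rightarrow> (real^2 \<Rightarrow> real^2) \<Rightarrow> (real^2) set \<Rightarrow> bool" where
  "C1c phi dphi \<Omega> \<longleftrightarrow>
     (\<forall>x. (phi has_derivative (\<lambda>v. dphi x \<bullet> v)) (at x)) \<and> continuous_on UNIV dphi \<and>
     compact (closure {x. phi x \<noteq> 0}) \<and> closure {x. phi x \<noteq> 0} \<subseteq> \<Omega>"

(* u \<in> H^1_0(Omega) with (weak) gradient g: limit in the H^1(Omega) norm of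
   compactly supported C^1 functions (closure of C_c^1(Omega) in H^1). *)
definition H10 :: "(real^2) set \<Rightarrow> (real^2 \<Rightarrow> real) \<Rightarrow> (real^2 \<Rightarrow> real^2) \<Rightarrow> bool" where
  "H10 \<Omega> u g \<longleftrightarrow>
     integrable (lebesgue_on \<Omega>) (\<lambda>x. (u x)\<^sup>2) \<and> u \<in> borel_measurable (lebesgue_on \<Omega>) \<and>
     integrable (lebesgue_on \<Omega>) (\<lambda>x. (norm (g x))\<^sup>2) \<and> g \<in> borel_measurable (lebesgue_on \<Omega>) \<and>
     (\<exists>phi dphi. (\<forall>n. C1c (phi n) (dphi n) \<Omega>) \<and>
        (\<lambda>n. \<integral>x. (phi n x - u x)\<^sup>2 \<partial>lebesgue_on \<Omega>) \<longlonglongrightarrow> 0 \<and>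
        (\<lambda>n. \<integral>x. (norm (dphi n x - g x))\<^sup>2 \<partial>lebesgue_on \<Omega>) \<longlonglongrightarrow> 0)"

definition Kset :: "(real^2) set \<Rightarrow> (real^2 \<Rightarrow> real) \<Rightarrow> (real^2 \<Rightarrow> real^2) \<Rightarrow> bool" where
  "Kset \<Omega> u g \<longleftrightarrow> H10 \<Omega> u g \<and> (AE x in lebesgue_on \<Omega>. u x \<ge> 0)"

definition vi_sol :: "(real^2) set \<Rightarrow> (real^2 \<Rightarrow> real) \<Rightarrow> real \<Rightarrow> real \<Rightarrow>
    (real^2 \<Rightarrow> real) \<Rightarrow> (real^2 \<Rightarrow> real^2) \<Rightarrow> bool" where
  "vi_sol \<Omega> h0 \<beta> \<gamma> q gq \<longleftrightarrow> Kset \<Omega> q gq \<and>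
     (\<forall>phi gphi. Kset \<Omega> phi gphi \<longrightarrow>
        (\<integral>x. (h0 x + \<beta>) ^ 3 * (gq x \<bullet> (gphi x - gq x)) \<partial>lebesgue_on \<Omega>)
        \<ge> (\<integral>x. h0 x * ((gphi x - gq x) $ 1) \<partial>lebesgue_on \<Omega>)
           - \<gamma> * (\<integral>x. phi x - q x \<partial>lebesgue_on \<Omega>))"

definition Gfun :: "(real^2) set \<Rightarrow> (real^2 \<Rightarrow> real) \<Rightarrow> real \<Rightarrow> real \<Rightarrow> real \<Rightarrow> real" where
  "Gfun \<Omega> h0 F \<beta> \<gamma> =
     (THE v. \<exists>q gq. vi_sol \<Omega> h0 \<beta> \<gamma> q gq \<and> v = (\<integral>x. q x \<partial>lebesgue_on \<Omega>) - F)"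

definition regular_boundary :: "(real^2) set \<Rightarrow> bool" where
  "regular_boundary \<Omega> \<longleftrightarrow>
     (\<forall>p\<in>frontier \<Omega>. \<exists>r>0. \<exists>(R::real^2 \<Rightarrow> real^2) f f'. orthogonal_transformation R \<and>
        (\<forall>s. (f has_real_derivative f' s) (at s)) \<and> continuous_on UNIV f' \<and>
        \<Omega> \<inter> ball p r = {x \<in> ball p r. (R (x - p)) $ 2 < f ((R (x - p)) $ 1)})"

definition regular_on :: "(real^2 \<Rightarrow> real) \<Rightarrow> (real^2) set \<Rightarrow> bool" where
  "regular_on h W \<longleftrightarrow> continuous_on (closure W) h \<and>
     (\<exists>D. continuous_on (closure W) D \<and> (\<forall>x\<in>W. (h has_derivative (\<lambda>v. D x \<bullet> v)) (at x)))"

definition caseI :: "(real^2) set \<Rightarrow> (real^2 \<Rightarrow> real) \<Rightarrow> bool" where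
  "caseI \<Omega> h0 \<longleftrightarrow>
     (\<forall>x\<in>\<Omega>. x $ 1 = 0 \<longrightarrow> h0 x = 0) \<and>
     (\<forall>x\<in>closure \<Omega>. x $ 1 \<noteq> 0 \<longrightarrow> h0 x > 0) \<and>
     (\<exists>\<alpha>::real. \<alpha> \<ge> 1 \<and> (\<exists>W h1. open W \<and> 0 \<in> W \<and> W \<subseteq> \<Omega> \<and> regular_on h1 W \<and>
        (\<forall>x\<in>closure W. h1 x > 0) \<and> (\<forall>x\<in>W. h0 x = \<bar>x $ 1\<bar> powr \<alpha> * h1 x)))"

definition caseII :: "(real^2) set \<Rightarrow> (real^2 \<Rightarrow> real) \<Rightarrow> bool" where
  "caseII \<Omega> h0 \<longleftrightarrow>
     (\<forall>x\<in>closure \<Omega>. x \<noteq> 0 \<longrightarrow> h0 x > 0) \<and>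
     (\<exists>\<alpha>::real. \<alpha> \<ge> 1 \<and> (\<exists>W h1. open W \<and> 0 \<in> W \<and> W \<subseteq> \<Omega> \<and> regular_on h1 W \<and>
        (\<forall>x\<in>closure W. h1 x > 0) \<and> (\<forall>x\<in>W. h0 x = norm x powr \<alpha> * h1 x)))"

definition Ival :: "ereal \<Rightarrow> real set" where
  "Ival T = {t. 0 \<le> t \<and> ereal t < T}"

(* eta is a C^2 solution on [0,T[ of eta'' = G(eta, eta'), eta(0)=eta0, eta'(0)=eta1, eta > 0;
   d1, d2 are its first and second derivatives (one-sided at 0) *)
definition ode_sol :: "(real \<Rightarrow> real \<Rightarrow> real) \<Rightarrow> real \<Rightarrow> real \<Rightarrow> ereal \<Rightarrow>
    (real \<Rightarrow> real) \<Rightarrow> (real \<Rightarrow> real) \<Rightarrow> (real \<Rightarrow> real) \<Rightarrow> bool" where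
  "ode_sol G eta0 eta1 T eta d1 d2 \<longleftrightarrow> T > 0 \<and> eta 0 = eta0 \<and> d1 0 = eta1 \<and>
     continuous_on (Ival T) d2 \<and>
     (\<forall>t\<in>Ival T. (eta has_real_derivative d1 t) (at t within Ival T) \<and>
                 (d1 has_real_derivative d2 t) (at t within Ival T) \<and>
                 eta t > 0 \<and> d2 t = G (eta t) (d1 t))"

definition maximal_ode_sol :: "(real \<Rightarrow> real \<Rightarrow> real) \<Rightarrow> real \<Rightarrow> real \<Rightarrow> ereal \<Rightarrow>
    (real \<Rightarrow> real) \<Rightarrow> (real \<Rightarrow> real) \<Rightarrow> (real \<Rightarrow> real) \<Rightarrow> bool" where
  "maximal_ode_sol G eta0 eta1 T eta d1 d2 \<longleftrightarrow> ode_sol G eta0 eta1 T eta d1 d2 \<and>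
     (\<forall>T' z z1 z2. ode_sol G eta0 eta1 T' z z1 z2 \<longrightarrow> T' \<le> T)"

end

theory Submission
  imports Defs
begin

text \<open>Let \<open>V\<^sub>1 = sup (- \<partial>\<^sub>1 h\<^sub>0)\<close>; it is positive because \<open>h\<^sub>0\<close> vanishes at the origin and
  is positive at the nearby points of the negative \<open>x\<^sub>1\<close>-axis. If \<open>\<gamma> \<ge> V\<^sub>1\<close>, integrating by
  parts gives \<open>\<integral> h\<^sub>0 \<partial>\<^sub>1\<phi> = - \<integral> \<partial>\<^sub>1h\<^sub>0 \<phi> \<le> \<gamma> \<integral> \<phi>\<close> for all \<open>\<phi> \<in> K\<close>, so \<open>q = 0\<close> solves the
  variational inequality, and every solution has \<open>\<integral> q = 0\<close>; hence \<open>G(\<beta>, \<gamma>) = -F < 0\<close>.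
  Consequently \<open>\<eta>'' < 0\<close> whenever \<open>\<eta>' \<ge> V\<^sub>2\<close>, and since \<open>\<eta>'(0) < V\<^sub>2\<close> the derivative \<open>\<eta>'\<close> can never
  reach \<open>V\<^sub>2\<close>.\<close>

section \<open>Integration by parts against compactly supported functions\<close>

lemma lborel_integral_translate:
  fixes f :: "'a::euclidean_space \<Rightarrow> real"
  assumes f: "integrable lborel f"
  shows "integrable lborel (\<lambda>x. f (c + x))" "(\<integral>x. f (c + x) \<partial>lborel) = integral\<^sup>L lborel f"
proof -
  have fm: "f \<in> borel_measurable borel" using borel_measurable_integrable[OF f] by simp
  have m: "(+) c \<in> measurable lborel borel" by simp
  show "integrable lborel (\<lambda>x. f (c + x))"
    using integrable_distr_eq[OF m fm] f by (simp add: lborel_distr_plus)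
  show "(\<integral>x. f (c + x) \<partial>lborel) = integral\<^sup>L lborel f"
    using integral_distr[OF m fm] by (simp add: lborel_distr_plus)
qed

lemma integrable_continuous_compact_support:
  fixes f :: "'a::euclidean_space \<Rightarrow> real"
  assumes "continuous_on UNIV f" "compact K" "\<And>x. x \<notin> K \<Longrightarrow> f x = 0"
  shows "integrable lborel f"
proof -
  have "integrable lborel (\<lambda>x. indicator K x *\<^sub>R f x)"
    using assms continuous_on_subset by (intro borel_integrable_compact) blast+
  also have "(\<lambda>x. indicator K x *\<^sub>R f x) = f"
    using assms(3) by (auto simp: indicator_def fun_eq_iff)
  finally show ?thesis .
qed

text \<open>The difference quotients of \<open>f\<close> in direction \<open>v\<close> have integral zero by translation
  invariance; they converge to \<open>g\<close> and are dominated by a bound on \<open>g\<close> (mean value theorem)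
  times the indicator of a ball containing all translates of the support.\<close>

lemma integral_directional_derivative_eq_0:
  fixes f g :: "'a::euclidean_space \<Rightarrow> real"
  assumes der: "\<And>x t. ((\<lambda>s. f (x + s *\<^sub>R v)) has_real_derivative g (x + t *\<^sub>R v)) (at t)"
    and cont: "continuous_on UNIV f" "continuous_on UNIV g"
    and K: "compact K" and supp: "\<And>x. x \<notin> K \<Longrightarrow> f x = 0" "\<And>x. x \<notin> K \<Longrightarrow> g x = 0"
  shows "integral\<^sup>L lborel g = 0"
proof -
  obtain R where R: "\<And>x. x \<in> K \<Longrightarrow> norm x \<le> R"
    using compact_imp_bounded[OF K] bounded_iff by blast
  have "bounded (range g)"
  proof (rule bounded_subset)
    show "bounded (insert 0 (g ` K))"
      using compact_continuous_image[OF continuous_on_subset[OF cont(2)] K] by (simp add: compact_imp_bounded)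
    show "range g \<subseteq> insert 0 (g ` K)" using supp(2) by blast
  qed
  then obtain B where B: "\<And>x. \<bar>g x\<bar> \<le> B" by (auto simp: bounded_iff)
  define C where "C = cball (0::'a) (R + norm v)"
  define h where "h n = inverse (real (Suc n))" for n
  have h: "0 < h n" "h n \<le> 1" for n by (auto simp: h_def field_simps)
  define quot where "quot n x = (f (x + h n *\<^sub>R v) - f x) / h n" for n x
  have fi: "integrable lborel f" by (rule integrable_continuous_compact_support[OF cont(1) K supp(1)])
  have quot0: "integral\<^sup>L lborel (quot n) = 0" for n
  proof -
    note translate = lborel_integral_translate[OF fi, of "h n *\<^sub>R v"]
    have "integral\<^sup>L lborel (quot n) = ((\<integral>x. f (h n *\<^sub>R v + x) \<partial>lborel) - integral\<^sup>L lborel f) / h n"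
      unfolding quot_def using translate(1) fi by (simp add: add.commute)
    then show ?thesis using translate(2) by simp
  qed
  have "(\<lambda>n. integral\<^sup>L lborel (quot n)) \<longlonglongrightarrow> integral\<^sup>L lborel g"
  proof (rule integral_dominated_convergence[where w="\<lambda>x. indicator C x * B"])
    have "integrable lborel (\<lambda>x. indicator C x *\<^sub>R B)"
      by (rule borel_integrable_compact) (auto simp: C_def)
    then show "integrable lborel (\<lambda>x. indicator C x * B)" by simp
    show "AE x in lborel. (\<lambda>n. quot n x) \<longlonglongrightarrow> g x"
    proof (intro AE_I2)
      fix x
      have "((\<lambda>s. (f (x + s *\<^sub>R v) - f x) / s) \<longlongrightarrow> g x) (at 0)"
        using der[of x 0] unfolding DERIV_def by simp
      moreover have "filterlim h (at 0) sequentially"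
        unfolding filterlim_at h_def using h LIMSEQ_inverse_real_of_nat by (auto simp: h_def)
      ultimately show "(\<lambda>n. quot n x) \<longlonglongrightarrow> g x"
        using filterlim_compose by (fastforce simp: quot_def)
    qed
    show "AE x in lborel. norm (quot n x) \<le> indicator C x * B" for n
    proof (intro AE_I2)
      fix x
      show "norm (quot n x) \<le> indicator C x * B"
      proof (cases "x \<in> C")
        case True
        obtain z where "f (x + h n *\<^sub>R v) - f (x + 0 *\<^sub>R v) = (h n - 0) * g (x + z *\<^sub>R v)"
          using MVT2[where f="\<lambda>s. f (x + s *\<^sub>R v)" and a=0 and b="h n" and f'="\<lambda>t. g (x + t *\<^sub>R v)"]
            h(1) der by blast
        then have "quot n x = g (x + z *\<^sub>R v)" using h(1)[of n] by (simp add: quot_def)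
        then show ?thesis using True B by simp
      next
        case False
        then have "norm x > R + norm v" by (simp add: C_def)
        moreover have "norm (x + h n *\<^sub>R v) \<ge> norm x - norm v"
          using norm_triangle_ineq2[of x "- (h n *\<^sub>R v)"] h[of n] mult_left_le_one_le[of "norm v" "h n"]
          by simp
        ultimately have "norm x > R" "norm (x + h n *\<^sub>R v) > R"
          using norm_ge_zero[of v] by linarith+
        then have "x \<notin> K" "x + h n *\<^sub>R v \<notin> K" using R by force+
        then show ?thesis using False supp(1) by (simp add: quot_def)
      qed
    qed
    show "quot n \<in> borel_measurable lborel" for n
      unfolding quot_def using borel_measurable_continuous_onI[OF cont(1)] by measurable
  qed (use borel_measurable_continuous_onI[OF cont(2)] in simp)
  then show ?thesis using quot0 by (simp add: LIMSEQ_const_iff)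
qed

lemma integral_directional_derivative_eq_0_on_open:
  fixes f :: "'a::euclidean_space \<Rightarrow> real" and Df :: "'a \<Rightarrow> 'a"
  assumes \<Omega>: "open \<Omega>" and S: "compact S" "S \<subseteq> \<Omega>"
    and der: "\<And>x. x \<in> \<Omega> \<Longrightarrow> (f has_derivative (\<lambda>u. Df x \<bullet> u)) (at x)"
    and cont: "continuous_on \<Omega> Df"
    and supp: "\<And>x. x \<in> \<Omega> - S \<Longrightarrow> f x = 0" "\<And>x. x \<in> \<Omega> - S \<Longrightarrow> Df x = 0"
  shows "(\<integral>x. Df x \<bullet> v \<partial>lebesgue_on \<Omega>) = 0"
proof -
  define F where "F x = (if x \<in> \<Omega> then f x else 0)" for x
  define DF where "DF x = (if x \<in> \<Omega> then Df x else 0)" for x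
  have outside: "F x = 0" "DF x = 0" if "x \<notin> S" for x
    using that supp by (auto simp: F_def DF_def)
  have open_outside: "open (- S)" using compact_imp_closed[OF S(1)] by (simp add: open_Compl)
  have F_der: "(F has_derivative (\<lambda>u. DF x \<bullet> u)) (at x)" for x
  proof (cases "x \<in> \<Omega>")
    case True
    then show ?thesis
      using has_derivative_transform_within_open[OF der \<Omega>] by (simp add: F_def DF_def)
  next
    case False
    then have "x \<notin> S" using S by auto
    then show ?thesis
      using has_derivative_transform_within_open[OF has_derivative_const open_outside, of x 0 F] outside
      by simp
  qed
  have "continuous_on \<Omega> DF" by (rule continuous_on_eq[OF cont]) (simp add: DF_def)
  moreover have "continuous_on (- S) DF"
    by (rule continuous_on_eq[OF continuous_on_const]) (simp add: outside)
  ultimately have "continuous_on (\<Omega> \<union> - S) DF"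
    by (intro continuous_on_open_Un \<Omega> open_outside)
  moreover have "\<Omega> \<union> - S = UNIV" using S by auto
  ultimately have DF_cont: "continuous_on UNIV DF" by simp
  have line_der: "((\<lambda>s. F (x + s *\<^sub>R v)) has_real_derivative DF (x + t *\<^sub>R v) \<bullet> v) (at t)" for x t
    unfolding has_field_derivative_def
    by (rule has_derivative_eq_rhs[OF has_derivative_compose[OF _ F_der]])
      (auto intro!: derivative_eq_intros simp: o_def fun_eq_iff)
  have "continuous_on UNIV F"
    by (intro continuous_at_imp_continuous_on ballI has_derivative_continuous[OF F_der])
  then have "integral\<^sup>L lborel (\<lambda>x. DF x \<bullet> v) = 0"
    using outside DF_cont
    by (intro integral_directional_derivative_eq_0[OF line_der _ _ S(1)] continuous_intros) auto
  moreover have "(\<integral>x. Df x \<bullet> v \<partial>lebesgue_on \<Omega>) = integral\<^sup>L lborel (\<lambda>x. DF x \<bullet> v)"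
  proof -
    have "\<Omega> \<in> sets lebesgue" using \<Omega> by (simp add: borel_open sets_completionI_sets)
    then have "(\<integral>x. Df x \<bullet> v \<partial>lebesgue_on \<Omega>) = (\<integral>x. indicator \<Omega> x *\<^sub>R (Df x \<bullet> v) \<partial>lebesgue)"
      by (intro integral_restrict_space) simp
    also have "(\<lambda>x. indicator \<Omega> x *\<^sub>R (Df x \<bullet> v)) = (\<lambda>x. DF x \<bullet> v)"
      by (auto simp: DF_def fun_eq_iff)
    also have "integral\<^sup>L lebesgue (\<lambda>x. DF x \<bullet> v) = integral\<^sup>L lborel (\<lambda>x. DF x \<bullet> v)"
      using DF_cont by (intro integral_completion) (simp add: borel_measurable_continuous_onI continuous_intros)
    finally show ?thesis .
  qed
  ultimately show ?thesis by simp
qed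

section \<open>Limits in mean square\<close>

lemma integrable_norm_diff_square:
  fixes a b :: "'a \<Rightarrow> 'b::{real_normed_vector, second_countable_topology}"
  assumes "a \<in> borel_measurable M" "b \<in> borel_measurable M"
    and "integrable M (\<lambda>x. (norm (a x))\<^sup>2)" "integrable M (\<lambda>x. (norm (b x))\<^sup>2)"
  shows "integrable M (\<lambda>x. (norm (a x - b x))\<^sup>2)"
proof (rule Bochner_Integration.integrable_bound)
  show "integrable M (\<lambda>x. 2 * (norm (a x))\<^sup>2 + 2 * (norm (b x))\<^sup>2)"
    using assms by simp
  show "AE x in M. norm ((norm (a x - b x))\<^sup>2) \<le> norm (2 * (norm (a x))\<^sup>2 + 2 * (norm (b x))\<^sup>2)"
  proof (intro AE_I2)
    fix x
    have "(norm (a x - b x))\<^sup>2 \<le> (norm (a x) + norm (b x))\<^sup>2"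
      by (simp add: norm_triangle_ineq4 power_mono)
    also have "\<dots> \<le> 2 * (norm (a x))\<^sup>2 + 2 * (norm (b x))\<^sup>2"
      using sum_squares_bound[of "norm (a x)" "norm (b x)"] by (simp add: power2_eq_square algebra_simps)
    finally show "norm ((norm (a x - b x))\<^sup>2) \<le> norm (2 * (norm (a x))\<^sup>2 + 2 * (norm (b x))\<^sup>2)"
      by simp
  qed
qed (use assms in simp)

context finite_measure
begin

lemma integrable_bounded_mult_square_integrable:
  fixes f w :: "'a \<Rightarrow> real"
  assumes f: "f \<in> borel_measurable M" "\<And>x. x \<in> space M \<Longrightarrow> \<bar>f x\<bar> \<le> B"
    and w: "w \<in> borel_measurable M" "integrable M (\<lambda>x. (w x)\<^sup>2)"
  shows "integrable M (\<lambda>x. f x * w x)"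
proof (rule Bochner_Integration.integrable_bound)
  show "integrable M (\<lambda>x. B * w x)"
    using square_integrable_imp_integrable[OF w] by simp
  show "AE x in M. norm (f x * w x) \<le> norm (B * w x)"
  proof (intro AE_I2)
    fix x assume "x \<in> space M"
    then have "\<bar>f x\<bar> \<le> \<bar>B\<bar>" using f(2) by force
    then show "norm (f x * w x) \<le> norm (B * w x)" by (simp add: abs_mult mult_right_mono)
  qed
qed (use f w in simp)

text \<open>Pointwise \<open>\<bar>w\<bar> \<le> \<epsilon>/2 + w\<^sup>2/(2\<epsilon>)\<close>.\<close>

lemma integral_abs_le_integral_square:
  fixes w :: "'a \<Rightarrow> real"
  assumes w: "w \<in> borel_measurable M" "integrable M (\<lambda>x. (w x)\<^sup>2)" and \<epsilon>: "\<epsilon> > 0"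
  shows "(\<integral>x. \<bar>w x\<bar> \<partial>M) \<le> \<epsilon> / 2 * measure M (space M) + (\<integral>x. (w x)\<^sup>2 \<partial>M) / (2 * \<epsilon>)"
proof -
  have "\<bar>w x\<bar> \<le> \<epsilon> / 2 + (w x)\<^sup>2 / (2 * \<epsilon>)" for x
  proof -
    have "0 \<le> (\<bar>w x\<bar> - \<epsilon>)\<^sup>2" by simp
    then show ?thesis using \<epsilon> by (simp add: field_simps power2_eq_square)
  qed
  then have "(\<integral>x. \<bar>w x\<bar> \<partial>M) \<le> (\<integral>x. \<epsilon> / 2 + (w x)\<^sup>2 / (2 * \<epsilon>) \<partial>M)"
    using square_integrable_imp_integrable[OF w] w(2) by (intro integral_mono) auto
  then show ?thesis using w(2) by (simp add: mult_ac)
qed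

lemma tendsto_integral_abs_of_tendsto_integral_square:
  fixes w :: "nat \<Rightarrow> 'a \<Rightarrow> real"
  assumes w: "\<And>n. w n \<in> borel_measurable M" "\<And>n. integrable M (\<lambda>x. (w n x)\<^sup>2)"
    and lim: "(\<lambda>n. \<integral>x. (w n x)\<^sup>2 \<partial>M) \<longlonglongrightarrow> 0"
  shows "(\<lambda>n. \<integral>x. \<bar>w n x\<bar> \<partial>M) \<longlonglongrightarrow> 0"
proof (rule order_tendstoI)
  fix r :: real assume "r < 0"
  then show "\<forall>\<^sub>F n in sequentially. r < (\<integral>x. \<bar>w n x\<bar> \<partial>M)"
    by (simp add: less_le_trans)
next
  fix r :: real assume r: "0 < r"
  define \<mu> where "\<mu> = measure M (space M)"
  define \<epsilon> where "\<epsilon> = r / (\<mu> + 1)"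
  have \<mu>: "0 \<le> \<mu>" by (simp add: \<mu>_def)
  have \<epsilon>: "0 < \<epsilon>" "\<epsilon> / 2 * \<mu> < r / 2" using r \<mu> by (auto simp: \<epsilon>_def field_simps)
  have "\<forall>\<^sub>F n in sequentially. (\<integral>x. (w n x)\<^sup>2 \<partial>M) < \<epsilon> * r"
    using order_tendstoD(2)[OF lim] \<epsilon>(1) r by simp
  then show "\<forall>\<^sub>F n in sequentially. (\<integral>x. \<bar>w n x\<bar> \<partial>M) < r"
  proof eventually_elim
    case (elim n)
    then have "(\<integral>x. (w n x)\<^sup>2 \<partial>M) / (2 * \<epsilon>) < r / 2" using \<epsilon>(1) by (simp add: field_simps)
    then show ?case
      using integral_abs_le_integral_square[OF w(1,2) \<epsilon>(1), of n] \<epsilon>(2) by (simp add: \<mu>_def)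
  qed
qed

lemma tendsto_integral_bounded_mult:
  fixes f u :: "'a \<Rightarrow> real" and un :: "nat \<Rightarrow> 'a \<Rightarrow> real"
  assumes f: "f \<in> borel_measurable M" "\<And>x. x \<in> space M \<Longrightarrow> \<bar>f x\<bar> \<le> B"
    and u: "u \<in> borel_measurable M" "integrable M (\<lambda>x. (u x)\<^sup>2)"
    and un: "\<And>n. un n \<in> borel_measurable M" "\<And>n. integrable M (\<lambda>x. (un n x - u x)\<^sup>2)"
    and lim: "(\<lambda>n. \<integral>x. (un n x - u x)\<^sup>2 \<partial>M) \<longlonglongrightarrow> 0"
  shows "(\<lambda>n. \<integral>x. f x * un n x \<partial>M) \<longlonglongrightarrow> (\<integral>x. f x * u x \<partial>M)"
proof -
  have diff_int: "integrable M (\<lambda>x. f x * (un n x - u x))" for n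
    using un u by (intro integrable_bounded_mult_square_integrable[OF f]) auto
  have u_int: "integrable M (\<lambda>x. f x * u x)"
    by (rule integrable_bounded_mult_square_integrable[OF f u])
  have L1: "(\<lambda>n. \<bar>B\<bar> * (\<integral>x. \<bar>un n x - u x\<bar> \<partial>M)) \<longlonglongrightarrow> 0"
    using tendsto_mult_right_zero[OF tendsto_integral_abs_of_tendsto_integral_square[OF _ un(2) lim]]
      un(1) u(1) by simp
  have "norm ((\<integral>x. f x * un n x \<partial>M) - (\<integral>x. f x * u x \<partial>M)) \<le> \<bar>B\<bar> * (\<integral>x. \<bar>un n x - u x\<bar> \<partial>M)"
    for n
  proof -
    have "(\<integral>x. f x * un n x \<partial>M) = (\<integral>x. f x * (un n x - u x) + f x * u x \<partial>M)"
      by (simp add: algebra_simps)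
    also have "\<dots> = (\<integral>x. f x * (un n x - u x) \<partial>M) + (\<integral>x. f x * u x \<partial>M)"
      by (rule Bochner_Integration.integral_add[OF diff_int u_int])
    finally have "(\<integral>x. f x * un n x \<partial>M) - (\<integral>x. f x * u x \<partial>M) = (\<integral>x. f x * (un n x - u x) \<partial>M)"
      by simp
    also have "\<bar>\<dots>\<bar> \<le> (\<integral>x. \<bar>B\<bar> * \<bar>un n x - u x\<bar> \<partial>M)"
    proof (rule order_trans[OF integral_abs_bound integral_mono])
      show "integrable M (\<lambda>x. \<bar>B\<bar> * \<bar>un n x - u x\<bar>)"
        using square_integrable_imp_integrable[OF _ un(2)] un(1) u(1) by simp
      show "\<bar>f x * (un n x - u x)\<bar> \<le> \<bar>B\<bar> * \<bar>un n x - u x\<bar>" if "x \<in> space M" for x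
        using f(2)[OF that] by (simp add: abs_mult mult_right_mono)
    qed (use diff_int in simp)
    finally show ?thesis by simp
  qed
  then have "(\<lambda>n. (\<integral>x. f x * un n x \<partial>M) - (\<integral>x. f x * u x \<partial>M)) \<longlonglongrightarrow> 0"
    by (intro Lim_null_comparison[OF always_eventually L1]) simp
  then show ?thesis by (simp add: LIM_zero_iff)
qed

end

section \<open>The variational inequality for large \<open>\<gamma>\<close>\<close>

lemma continuous_on_closure_bounded:
  fixes f :: "'a::euclidean_space \<Rightarrow> 'b::real_normed_vector"
  assumes "continuous_on (closure S) f" "bounded S"
  obtains B where "\<And>x. x \<in> S \<Longrightarrow> norm (f x) \<le> B"
proof -
  obtain B where "\<And>x. x \<in> closure S \<Longrightarrow> norm (f x) \<le> B"
    using continuous_on_compact_bound[OF compact_closure[THEN iffD2, OF assms(2)] assms(1)] by blast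
  then show thesis using closure_subset that by blast
qed

lemma C1c_continuous: "C1c \<phi> d\<phi> \<Omega> \<Longrightarrow> continuous_on UNIV \<phi>"
  unfolding C1c_def by (metis continuous_at_imp_continuous_on has_derivative_continuous)

lemma C1c_outside_support:
  assumes C: "C1c \<phi> d\<phi> \<Omega>" and x: "x \<notin> closure {x. \<phi> x \<noteq> 0}"
  shows "\<phi> x = 0" "d\<phi> x = 0"
proof -
  define U where "U = - closure {x. \<phi> x \<noteq> 0}"
  have outside: "\<phi> y = 0" if "y \<in> U" for y
  proof -
    have "y \<notin> {x. \<phi> x \<noteq> 0}"
      by (rule contra_subsetD[OF closure_subset]) (use that in \<open>simp add: U_def\<close>)
    then show ?thesis by simp
  qed
  have xU: "x \<in> U" using x by (simp add: U_def)
  then show "\<phi> x = 0" by (rule outside)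
  have "((\<lambda>_. 0) has_derivative (\<lambda>v. 0)) (at x)" by simp
  then have "(\<phi> has_derivative (\<lambda>v. 0)) (at x)"
  proof (rule has_derivative_transform_within_open[where s=U, OF _ _ xU])
    show "open U" unfolding U_def by (rule open_Compl[OF closed_closure])
  qed (simp add: outside)
  moreover have "(\<phi> has_derivative (\<lambda>v. d\<phi> x \<bullet> v)) (at x)" using C by (simp add: C1c_def)
  ultimately have "(\<lambda>v. 0) = (\<lambda>v. d\<phi> x \<bullet> v)" by (rule has_derivative_unique)
  then have "d\<phi> x \<bullet> d\<phi> x = 0" by (rule fun_cong[THEN sym])
  then show "d\<phi> x = 0" by simp
qed

lemma square_component_le_square_norm: "(x $ i)\<^sup>2 \<le> (norm (x :: real^'n))\<^sup>2"
  using component_le_norm_cart[of x i] abs_le_square_iff[of "x $ i" "norm x"] by simp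

lemma integrable_square_component:
  fixes f :: "'a \<Rightarrow> real^'n"
  assumes "f \<in> borel_measurable M" "integrable M (\<lambda>x. (norm (f x))\<^sup>2)"
  shows "integrable M (\<lambda>x. (f x $ i)\<^sup>2)"
  using assms square_component_le_square_norm
  by (intro Bochner_Integration.integrable_bound[OF assms(2)] AE_I2) (auto simp: cart_eq_inner_axis)

lemma Kset_zero: "Kset \<Omega> (\<lambda>_. 0) (\<lambda>_. 0)"
proof -
  have "C1c (\<lambda>_. 0) (\<lambda>_. 0) \<Omega>" by (simp add: C1c_def)
  then show ?thesis unfolding Kset_def H10_def by (intro conjI exI[of _ "\<lambda>_ _. 0"]) auto
qed

context
  fixes \<Omega> :: "(real^2) set" and h0 :: "real^2 \<Rightarrow> real" and Dh0 :: "real^2 \<Rightarrow> real^2"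
  assumes open_\<Omega>: "open \<Omega>" and bounded_\<Omega>: "bounded \<Omega>"
    and h0_cont: "continuous_on (closure \<Omega>) h0" and Dh0_cont: "continuous_on (closure \<Omega>) Dh0"
    and h0_deriv: "\<forall>x\<in>\<Omega>. (h0 has_derivative (\<lambda>v. Dh0 x \<bullet> v)) (at x)"
begin

lemma sets_lebesgue_\<Omega>: "\<Omega> \<in> sets lebesgue"
  using open_\<Omega> by (simp add: borel_open sets_completionI_sets)

lemma finite_measure_\<Omega>: "finite_measure (lebesgue_on \<Omega>)"
  by (rule finite_measure_lebesgue_on[OF bounded_set_imp_lmeasurable[OF bounded_\<Omega> sets_lebesgue_\<Omega>]])

lemma measurable_on_\<Omega>:
  "continuous_on \<Omega> g \<Longrightarrow> g \<in> borel_measurable (lebesgue_on \<Omega>)"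
  by (rule continuous_imp_measurable_on_sets_lebesgue[OF _ sets_lebesgue_\<Omega>])

lemma h0_measurable: "h0 \<in> borel_measurable (lebesgue_on \<Omega>)"
  and partial1_h0_measurable: "(\<lambda>x. Dh0 x $ 1) \<in> borel_measurable (lebesgue_on \<Omega>)"
  using continuous_on_subset[OF h0_cont closure_subset] continuous_on_subset[OF Dh0_cont closure_subset]
  by (auto intro!: measurable_on_\<Omega> continuous_intros)

lemma h0_bounded:
  obtains B where "\<And>x. x \<in> \<Omega> \<Longrightarrow> \<bar>h0 x\<bar> \<le> B"
  using continuous_on_closure_bounded[OF h0_cont bounded_\<Omega>] by force

lemma partial1_h0_bounded:
  obtains B where "\<And>x. x \<in> \<Omega> \<Longrightarrow> \<bar>Dh0 x $ 1\<bar> \<le> B"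
  using continuous_on_closure_bounded[OF Dh0_cont bounded_\<Omega>]
  by (metis component_le_norm_cart order_trans)

lemma bdd_above_neg_partial1_h0: "bdd_above ((\<lambda>x. - (Dh0 x $ 1)) ` \<Omega>)"
proof -
  obtain B where "\<And>x. x \<in> \<Omega> \<Longrightarrow> \<bar>Dh0 x $ 1\<bar> \<le> B" using partial1_h0_bounded by blast
  then show ?thesis by (intro bdd_aboveI2[where M=B]) (simp add: abs_le_iff)
qed

lemma C1c_square_integrable:
  assumes "C1c \<phi> d\<phi> \<Omega>"
  shows "\<phi> \<in> borel_measurable (lebesgue_on \<Omega>)" "d\<phi> \<in> borel_measurable (lebesgue_on \<Omega>)"
    "integrable (lebesgue_on \<Omega>) (\<lambda>x. (\<phi> x)\<^sup>2)" "integrable (lebesgue_on \<Omega>) (\<lambda>x. (norm (d\<phi> x))\<^sup>2)"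
proof -
  interpret finite_measure "lebesgue_on \<Omega>" by (rule finite_measure_\<Omega>)
  have cont: "continuous_on UNIV \<phi>" "continuous_on UNIV d\<phi>"
    using assms C1c_continuous by (auto simp: C1c_def)
  then show meas: "\<phi> \<in> borel_measurable (lebesgue_on \<Omega>)" "d\<phi> \<in> borel_measurable (lebesgue_on \<Omega>)"
    by (auto intro: measurable_on_\<Omega> continuous_on_subset)
  obtain B1 where "\<And>x. x \<in> \<Omega> \<Longrightarrow> norm (\<phi> x) \<le> B1"
    using continuous_on_closure_bounded[OF continuous_on_subset[OF cont(1)] bounded_\<Omega>] by blast
  then show "integrable (lebesgue_on \<Omega>) (\<lambda>x. (\<phi> x)\<^sup>2)"
    using meas by (intro integrable_const_bound[where B="B1\<^sup>2"] AE_I2)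
      (auto simp: abs_le_square_iff[symmetric] intro: order_trans[OF _ abs_ge_self])
  obtain B2 where "\<And>x. x \<in> \<Omega> \<Longrightarrow> norm (d\<phi> x) \<le> B2"
    using continuous_on_closure_bounded[OF continuous_on_subset[OF cont(2)] bounded_\<Omega>] by blast
  then show "integrable (lebesgue_on \<Omega>) (\<lambda>x. (norm (d\<phi> x))\<^sup>2)"
    using meas by (intro integrable_const_bound[where B="B2\<^sup>2"] AE_I2)
      (auto simp: abs_le_square_iff[symmetric] intro: order_trans[OF _ abs_ge_self])
qed

lemma integral_partial1_h0_C1c:
  assumes C: "C1c \<phi> d\<phi> \<Omega>"
  shows "(\<integral>x. h0 x * d\<phi> x $ 1 + Dh0 x $ 1 * \<phi> x \<partial>lebesgue_on \<Omega>) = 0"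
proof -
  define S where "S = closure {x. \<phi> x \<noteq> 0}"
  have S: "compact S" "S \<subseteq> \<Omega>" and d\<phi>: "\<And>x. (\<phi> has_derivative (\<lambda>v. d\<phi> x \<bullet> v)) (at x)"
    and d\<phi>_cont: "continuous_on UNIV d\<phi>"
    using C by (auto simp: C1c_def S_def)
  define Df where "Df x = h0 x *\<^sub>R d\<phi> x + \<phi> x *\<^sub>R Dh0 x" for x
  have "(\<integral>x. Df x \<bullet> axis 1 1 \<partial>lebesgue_on \<Omega>) = 0"
  proof (rule integral_directional_derivative_eq_0_on_open[OF open_\<Omega> S])
    show "((\<lambda>x. h0 x * \<phi> x) has_derivative (\<lambda>u. Df x \<bullet> u)) (at x)" if "x \<in> \<Omega>" for x
      using has_derivative_mult[OF h0_deriv[rule_format, OF that] d\<phi>]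
      by (simp add: Df_def inner_add_left algebra_simps)
    show "continuous_on \<Omega> Df"
      unfolding Df_def
      using continuous_on_subset[OF h0_cont closure_subset] continuous_on_subset[OF Dh0_cont closure_subset]
        continuous_on_subset[OF d\<phi>_cont] continuous_on_subset[OF C1c_continuous[OF C]]
      by (intro continuous_intros) auto
    fix x assume "x \<in> \<Omega> - S"
    then have "\<phi> x = 0" "d\<phi> x = 0" using C1c_outside_support[OF C, of x] by (simp_all add: S_def)
    then show "h0 x * \<phi> x = 0" "Df x = 0" by (simp_all add: Df_def)
  qed
  moreover have "Df x \<bullet> axis 1 1 = h0 x * d\<phi> x $ 1 + Dh0 x $ 1 * \<phi> x" for x
    by (simp add: Df_def inner_axis)
  ultimately show ?thesis by simp
qed

lemma integral_partial1_h0_H10: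
  assumes "H10 \<Omega> p gp"
  shows "(\<integral>x. h0 x * gp x $ 1 \<partial>lebesgue_on \<Omega>) = - (\<integral>x. Dh0 x $ 1 * p x \<partial>lebesgue_on \<Omega>)"
proof -
  let ?M = "lebesgue_on \<Omega>"
  interpret finite_measure ?M by (rule finite_measure_\<Omega>)
  obtain Bh where Bh: "\<And>x. x \<in> \<Omega> \<Longrightarrow> \<bar>h0 x\<bar> \<le> Bh" using h0_bounded by blast
  obtain BD where BD: "\<And>x. x \<in> \<Omega> \<Longrightarrow> \<bar>Dh0 x $ 1\<bar> \<le> BD" using partial1_h0_bounded by blast
  from assms obtain \<phi> d\<phi> where
      p: "p \<in> borel_measurable ?M" "integrable ?M (\<lambda>x. (p x)\<^sup>2)"
    and gp: "gp \<in> borel_measurable ?M" "integrable ?M (\<lambda>x. (norm (gp x))\<^sup>2)"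
    and C: "\<And>n. C1c (\<phi> n) (d\<phi> n) \<Omega>"
    and lim_\<phi>: "(\<lambda>n. \<integral>x. (\<phi> n x - p x)\<^sup>2 \<partial>?M) \<longlonglongrightarrow> 0"
    and lim_d\<phi>: "(\<lambda>n. \<integral>x. (norm (d\<phi> n x - gp x))\<^sup>2 \<partial>?M) \<longlonglongrightarrow> 0"
    unfolding H10_def by blast
  note \<phi> = C1c_square_integrable[OF C]
  have d\<phi>_diff: "integrable ?M (\<lambda>x. (norm (d\<phi> n x - gp x))\<^sup>2)" for n
    using \<phi> gp by (intro integrable_norm_diff_square) auto
  have lim_h0: "(\<lambda>n. \<integral>x. h0 x * d\<phi> n x $ 1 \<partial>?M) \<longlonglongrightarrow> (\<integral>x. h0 x * gp x $ 1 \<partial>?M)"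
  proof (rule tendsto_integral_bounded_mult[OF h0_measurable])
    show "integrable ?M (\<lambda>x. (d\<phi> n x $ 1 - gp x $ 1)\<^sup>2)" for n
      using integrable_square_component[OF _ d\<phi>_diff, of n 1] \<phi> gp by simp
    have "norm (\<integral>x. (d\<phi> n x $ 1 - gp x $ 1)\<^sup>2 \<partial>?M) \<le> (\<integral>x. (norm (d\<phi> n x - gp x))\<^sup>2 \<partial>?M)" for n
    proof -
      have "(\<integral>x. (d\<phi> n x $ 1 - gp x $ 1)\<^sup>2 \<partial>?M) \<le> (\<integral>x. (norm (d\<phi> n x - gp x))\<^sup>2 \<partial>?M)"
        using integrable_square_component[OF _ d\<phi>_diff, of n 1] \<phi> gp d\<phi>_diff
          square_component_le_square_norm[of "d\<phi> n _ - gp _" 1]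
        by (intro integral_mono) auto
      then show ?thesis by simp
    qed
    then show "(\<lambda>n. \<integral>x. (d\<phi> n x $ 1 - gp x $ 1)\<^sup>2 \<partial>?M) \<longlonglongrightarrow> 0"
      by (intro Lim_null_comparison[OF always_eventually lim_d\<phi>]) auto
  qed (use Bh \<phi> gp integrable_square_component in \<open>auto simp: cart_eq_inner_axis\<close>)
  have lim_Dh0: "(\<lambda>n. \<integral>x. Dh0 x $ 1 * \<phi> n x \<partial>?M) \<longlonglongrightarrow> (\<integral>x. Dh0 x $ 1 * p x \<partial>?M)"
    using integrable_norm_diff_square[OF \<phi>(1) p(1)] \<phi> p BD lim_\<phi>
    by (intro tendsto_integral_bounded_mult[OF partial1_h0_measurable]) auto
  have "(\<integral>x. h0 x * d\<phi> n x $ 1 \<partial>?M) + (\<integral>x. Dh0 x $ 1 * \<phi> n x \<partial>?M) = 0" for n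
  proof -
    have "integrable ?M (\<lambda>x. h0 x * d\<phi> n x $ 1)"
      using Bh \<phi> integrable_square_component[OF \<phi>(2,4), of n 1]
      by (intro integrable_bounded_mult_square_integrable[OF h0_measurable]) (auto simp: cart_eq_inner_axis)
    moreover have "integrable ?M (\<lambda>x. Dh0 x $ 1 * \<phi> n x)"
      using BD \<phi> by (intro integrable_bounded_mult_square_integrable[OF partial1_h0_measurable]) auto
    ultimately have "(\<integral>x. h0 x * d\<phi> n x $ 1 + Dh0 x $ 1 * \<phi> n x \<partial>?M)
        = (\<integral>x. h0 x * d\<phi> n x $ 1 \<partial>?M) + (\<integral>x. Dh0 x $ 1 * \<phi> n x \<partial>?M)"
      by (rule Bochner_Integration.integral_add)
    then show ?thesis using integral_partial1_h0_C1c[OF C, of n] by simp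
  qed
  then have "(\<integral>x. h0 x * gp x $ 1 \<partial>?M) + (\<integral>x. Dh0 x $ 1 * p x \<partial>?M) = 0"
    using LIMSEQ_unique[OF tendsto_add[OF lim_h0 lim_Dh0]] by simp
  then show ?thesis by linarith
qed

lemma integral_h0_partial1_le:
  assumes K: "Kset \<Omega> p gp" and \<gamma>: "\<forall>x\<in>\<Omega>. - (Dh0 x $ 1) \<le> \<gamma>"
  shows "(\<integral>x. h0 x * gp x $ 1 \<partial>lebesgue_on \<Omega>) \<le> \<gamma> * (\<integral>x. p x \<partial>lebesgue_on \<Omega>)"
proof -
  let ?M = "lebesgue_on \<Omega>"
  interpret finite_measure ?M by (rule finite_measure_\<Omega>)
  have H: "H10 \<Omega> p gp" and p_nonneg: "AE x in ?M. 0 \<le> p x" using K by (auto simp: Kset_def)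
  then have p: "p \<in> borel_measurable ?M" "integrable ?M (\<lambda>x. (p x)\<^sup>2)" by (auto simp: H10_def)
  obtain BD where BD: "\<And>x. x \<in> \<Omega> \<Longrightarrow> \<bar>Dh0 x $ 1\<bar> \<le> BD" using partial1_h0_bounded by blast
  have "integrable ?M (\<lambda>x. Dh0 x $ 1 * p x)"
    using BD p by (intro integrable_bounded_mult_square_integrable[OF partial1_h0_measurable]) auto
  moreover have "integrable ?M p" by (rule square_integrable_imp_integrable[OF p])
  moreover have "AE x in ?M. - (Dh0 x $ 1) * p x \<le> \<gamma> * p x"
    using p_nonneg AE_space
  proof eventually_elim
    case (elim x)
    then show ?case using mult_right_mono[OF \<gamma>[rule_format, of x] elim(1)] by simp
  qed
  ultimately have "(\<integral>x. - (Dh0 x $ 1) * p x \<partial>?M) \<le> (\<integral>x. \<gamma> * p x \<partial>?M)"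
    by (intro integral_mono_AE) auto
  then show ?thesis using integral_partial1_h0_H10[OF H] by simp
qed

lemma vi_sol_zero:
  assumes "\<forall>x\<in>\<Omega>. - (Dh0 x $ 1) \<le> \<gamma>"
  shows "vi_sol \<Omega> h0 \<beta> \<gamma> (\<lambda>_. 0) (\<lambda>_. 0)"
  using integral_h0_partial1_le[OF _ assms] by (simp add: vi_sol_def Kset_zero)

text \<open>Testing the inequality with \<open>\<phi> = 0\<close> and combining it with the previous lemma gives
  \<open>\<integral>(h0 + \<beta>)\<^sup>3 \<bar>\<nabla>q\<bar>\<^sup>2 \<le> 0\<close>; so \<open>\<nabla>q = 0\<close> a.e., and then the same test gives \<open>\<gamma> \<integral>q \<le> 0\<close>.\<close>

lemma integral_eq_0_if_vi_sol:
  assumes h0_nonneg: "\<forall>x\<in>\<Omega>. 0 \<le> h0 x" and \<beta>: "0 < \<beta>" and \<gamma>: "0 < \<gamma>"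
    and \<gamma>_bound: "\<forall>x\<in>\<Omega>. - (Dh0 x $ 1) \<le> \<gamma>" and sol: "vi_sol \<Omega> h0 \<beta> \<gamma> q gq"
  shows "(\<integral>x. q x \<partial>lebesgue_on \<Omega>) = 0"
proof -
  let ?M = "lebesgue_on \<Omega>"
  interpret finite_measure ?M by (rule finite_measure_\<Omega>)
  define w where "w x = (h0 x + \<beta>) ^ 3" for x
  have K: "Kset \<Omega> q gq" using sol by (simp add: vi_sol_def)
  then have gq: "gq \<in> borel_measurable ?M" "integrable ?M (\<lambda>x. (norm (gq x))\<^sup>2)"
    and q_nonneg: "AE x in ?M. 0 \<le> q x"
    by (auto simp: Kset_def H10_def)
  have test0: "(\<integral>x. w x * (norm (gq x))\<^sup>2 \<partial>?M) \<le> (\<integral>x. h0 x * gq x $ 1 \<partial>?M) - \<gamma> * (\<integral>x. q x \<partial>?M)"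
    using sol Kset_zero unfolding vi_sol_def
    by (force simp: w_def power2_norm_eq_inner inner_diff_right)
  have key: "(\<integral>x. h0 x * gq x $ 1 \<partial>?M) \<le> \<gamma> * (\<integral>x. q x \<partial>?M)"
    by (rule integral_h0_partial1_le[OF K \<gamma>_bound])
  have w_pos: "0 < w x" if "x \<in> \<Omega>" for x
    using h0_nonneg that \<beta> by (simp add: w_def add_nonneg_pos)
  obtain Bh where Bh: "\<And>x. x \<in> \<Omega> \<Longrightarrow> \<bar>h0 x\<bar> \<le> Bh" using h0_bounded by blast
  have w_int: "integrable ?M (\<lambda>x. w x * (norm (gq x))\<^sup>2)"
  proof (rule Bochner_Integration.integrable_bound)
    show "integrable ?M (\<lambda>x. (Bh + \<beta>) ^ 3 * (norm (gq x))\<^sup>2)" using gq by simp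
    show "AE x in ?M. norm (w x * (norm (gq x))\<^sup>2) \<le> norm ((Bh + \<beta>) ^ 3 * (norm (gq x))\<^sup>2)"
    proof (intro AE_I2)
      fix x assume "x \<in> space ?M"
      then have x: "x \<in> \<Omega>" by simp
      have "w x \<le> (Bh + \<beta>) ^ 3"
        unfolding w_def using Bh[OF x] h0_nonneg x \<beta> by (intro power_mono) auto
      then show "norm (w x * (norm (gq x))\<^sup>2) \<le> norm ((Bh + \<beta>) ^ 3 * (norm (gq x))\<^sup>2)"
        using w_pos[OF x] by (simp add: abs_mult mult_right_mono)
    qed
  qed (use h0_measurable gq in \<open>simp add: w_def\<close>)
  have w_nonneg: "AE x in ?M. 0 \<le> w x * (norm (gq x))\<^sup>2"
    using w_pos by (intro AE_I2) (simp add: less_imp_le)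
  have "(\<integral>x. w x * (norm (gq x))\<^sup>2 \<partial>?M) = 0"
    using test0 key integral_nonneg_AE[OF w_nonneg] by linarith
  then have "AE x in ?M. w x * (norm (gq x))\<^sup>2 = 0"
    using integral_nonneg_eq_0_iff_AE[OF w_int w_nonneg] by simp
  then have "AE x in ?M. gq x = 0"
    using AE_space by eventually_elim (use w_pos in fastforce)
  then have "(\<integral>x. h0 x * gq x $ 1 \<partial>?M) = 0"
    by (subst integral_cong_AE[where g="\<lambda>_. 0"]) (use h0_measurable gq in \<open>auto simp: cart_eq_inner_axis elim: AE_mp\<close>)
  then have "\<gamma> * (\<integral>x. q x \<partial>?M) \<le> 0"
    using test0 integral_nonneg_AE[OF w_nonneg] by linarith
  then show ?thesis
    using \<gamma> integral_nonneg_AE[OF q_nonneg] by (simp add: mult_le_0_iff)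
qed

lemma Gfun_eq_neg:
  assumes "\<forall>x\<in>\<Omega>. 0 \<le> h0 x" "0 < \<beta>" "0 < \<gamma>" "\<forall>x\<in>\<Omega>. - (Dh0 x $ 1) \<le> \<gamma>"
  shows "Gfun \<Omega> h0 F \<beta> \<gamma> = - F"
  unfolding Gfun_def
  using vi_sol_zero[OF assms(4)] integral_eq_0_if_vi_sol[OF assms]
  by (intro the_equality) fastforce+

end

section \<open>The barrier for \<open>\<eta>'\<close>\<close>

lemma caseI_or_caseII_pos:
  assumes "caseI \<Omega> h0 \<or> caseII \<Omega> h0" "x \<in> closure \<Omega>" "x $ 1 \<noteq> 0"
  shows "0 < h0 x"
proof -
  have "x \<noteq> 0" using assms(3) by auto
  then show ?thesis using assms unfolding caseI_def caseII_def by blast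
qed

lemma partial1_negative_somewhere:
  fixes h0 :: "real^2 \<Rightarrow> real" and Dh0 :: "real^2 \<Rightarrow> real^2"
  assumes \<Omega>: "open \<Omega>" "0 \<in> \<Omega>" and h0_deriv: "\<forall>x\<in>\<Omega>. (h0 has_derivative (\<lambda>v. Dh0 x \<bullet> v)) (at x)"
    and h0_0: "h0 0 = 0" and pos: "\<And>x. x \<in> \<Omega> \<Longrightarrow> x $ 1 \<noteq> 0 \<Longrightarrow> 0 < h0 x"
  obtains x where "x \<in> \<Omega>" "Dh0 x $ 1 < 0"
proof -
  define e :: "real^2" where "e = axis 1 1"
  obtain r where r: "0 < r" "ball 0 r \<subseteq> \<Omega>" using \<Omega> open_contains_ball by blast
  define s where "s = r / 2"
  have s: "0 < s" using r by (simp add: s_def)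
  have on_axis: "t *\<^sub>R e \<in> \<Omega>" if "\<bar>t\<bar> \<le> s" for t
    using that r by (auto simp: s_def e_def subset_iff)
  have "((\<lambda>t. h0 (t *\<^sub>R e)) has_real_derivative Dh0 (t *\<^sub>R e) $ 1) (at t)" if "- s \<le> t" "t \<le> 0" for t
  proof -
    have "t *\<^sub>R e \<in> \<Omega>" using that by (intro on_axis) auto
    moreover have "((\<lambda>t. t *\<^sub>R e) has_derivative (\<lambda>u. u *\<^sub>R e)) (at t)"
      by (auto intro!: derivative_eq_intros)
    ultimately have "((\<lambda>t. h0 (t *\<^sub>R e)) has_derivative (\<lambda>u. Dh0 (t *\<^sub>R e) \<bullet> (u *\<^sub>R e))) (at t)"
      using has_derivative_compose h0_deriv by fastforce
    then show ?thesis
      unfolding has_field_derivative_def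
      by (rule has_derivative_eq_rhs) (auto simp: e_def cart_eq_inner_axis fun_eq_iff)
  qed
  then obtain z where z: "- s < z" "z < 0" "h0 (0 *\<^sub>R e) - h0 ((- s) *\<^sub>R e) = (0 - - s) * Dh0 (z *\<^sub>R e) $ 1"
    using MVT2[of "- s" 0 "\<lambda>t. h0 (t *\<^sub>R e)" "\<lambda>t. Dh0 (t *\<^sub>R e) $ 1"] s by auto
  have "0 < h0 ((- s) *\<^sub>R e)" using pos on_axis[of "- s"] s by (simp add: e_def)
  then have "s * Dh0 (z *\<^sub>R e) $ 1 < 0" using z(3) h0_0 by simp
  then have "Dh0 (z *\<^sub>R e) $ 1 < 0" using s by (simp add: mult_less_0_iff)
  moreover have "z *\<^sub>R e \<in> \<Omega>" using z by (intro on_axis) auto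
  ultimately show thesis using that by blast
qed

lemma derivative_upper_barrier:
  fixes d1 d2 :: "real \<Rightarrow> real" and I :: "real set"
  assumes I: "is_interval I" "0 \<in> I" "I \<subseteq> {0..}"
    and der: "\<And>t. t \<in> I \<Longrightarrow> (d1 has_real_derivative d2 t) (at t within I)"
    and start: "d1 0 < V" and barrier: "\<And>t. t \<in> I \<Longrightarrow> V \<le> d1 t \<Longrightarrow> d2 t < 0"
    and t: "t \<in> I"
  shows "d1 t < V"
proof (rule ccontr)
  assume "\<not> d1 t < V"
  have segment: "{0..t} \<subseteq> I"
    using interval_subset_is_interval[OF I(1), of 0 t] I(2) t by simp
  define S where "S = {0..t} \<inter> d1 -` {V..}"
  have "continuous_on {0..t} d1"
    using der segment by (meson DERIV_continuous continuous_on_eq_continuous_within continuous_on_subset)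
  then have "closed S" unfolding S_def by (rule continuous_closed_preimage) auto
  moreover have "t \<in> S" "bdd_below S" using \<open>\<not> d1 t < V\<close> segment I t by (auto simp: S_def)
  ultimately have "Inf S \<in> S" by (intro closed_contains_Inf) auto
  define t0 where "t0 = Inf S"
  have t0S: "t0 \<in> S" using \<open>Inf S \<in> S\<close> by (simp add: t0_def)
  then have "t0 \<noteq> 0" using start by (auto simp: S_def)
  then have t0: "0 < t0" "t0 \<in> I" using t0S segment by (auto simp: S_def)
  obtain d where d: "0 < d" "\<And>h. 0 < h \<Longrightarrow> t0 - h \<in> I \<Longrightarrow> h < d \<Longrightarrow> d1 t0 < d1 (t0 - h)"
    using has_real_derivative_neg_dec_left[OF der[OF t0(2)] barrier[OF t0(2)]] t0S
    by (auto simp: S_def)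
  define h where "h = min (d / 2) t0"
  have h: "0 < h" "h < d" "t0 - h \<in> {0..t}" using d t0 t0S by (auto simp: h_def S_def)
  then have "t0 - h \<in> I" using segment by blast
  then have "d1 t0 < d1 (t0 - h)" using d(2) h by blast
  then have "t0 - h \<in> S" using h(3) t0S by (auto simp: S_def)
  then have "t0 \<le> t0 - h" unfolding t0_def by (rule cInf_lower) (use \<open>bdd_below S\<close> in simp)
  then show False using h by simp
qed

lemma is_interval_Ival: "is_interval (Ival T)"
  unfolding is_interval_1 Ival_def by clarsimp (meson ereal_less_eq(3) le_less_trans)

theorem proposition4p1:
  fixes \<Omega> :: "(real^2) set" and h0 :: "real^2 \<Rightarrow> real" and Dh0 :: "real^2 \<Rightarrow> real^2"
    and F eta0 eta1 :: real and T :: ereal and eta d1 d2 :: "real \<Rightarrow> real"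
  assumes "open \<Omega>" and "bounded \<Omega>" and "regular_boundary \<Omega>" and "0 \<in> \<Omega>"
    and "continuous_on (closure \<Omega>) h0" and "continuous_on (closure \<Omega>) Dh0"
    and "\<forall>x\<in>\<Omega>. (h0 has_derivative (\<lambda>v. Dh0 x \<bullet> v)) (at x)"
    and "\<forall>x\<in>closure \<Omega>. h0 x \<ge> 0" and "h0 0 = 0"
    and "F > 0"
    and "caseI \<Omega> h0 \<or> caseII \<Omega> h0"
    and "eta0 > 0"
    and "maximal_ode_sol (Gfun \<Omega> h0 F) eta0 eta1 T eta d1 d2"
  shows "\<forall>t\<in>Ival T. d1 t < max (eta1 + 1) (SUP x\<in>\<Omega>. - (Dh0 x $ 1))"
proof
  define V1 where "V1 = (SUP x\<in>\<Omega>. - (Dh0 x $ 1))"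
  have V1_upper: "- (Dh0 x $ 1) \<le> V1" if "x \<in> \<Omega>" for x
    unfolding V1_def by (rule cSUP_upper[OF that bdd_above_neg_partial1_h0[OF assms(1,2,5,6,7)]])
  obtain x where "x \<in> \<Omega>" "Dh0 x $ 1 < 0"
    using partial1_negative_somewhere[OF assms(1,4,7,9)] caseI_or_caseII_pos[OF assms(11)]
      closure_subset by blast
  then have V1_pos: "0 < V1" using V1_upper by fastforce
  have ode: "ode_sol (Gfun \<Omega> h0 F) eta0 eta1 T eta d1 d2"
    using assms(13) by (simp add: maximal_ode_sol_def)
  fix t assume "t \<in> Ival T"
  then show "d1 t < max (eta1 + 1) V1"
  proof (rule derivative_upper_barrier[OF is_interval_Ival, rotated -1])
    fix s assume s: "s \<in> Ival T" "max (eta1 + 1) V1 \<le> d1 s"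
    have "0 < eta s" using ode s(1) by (simp add: ode_sol_def)
    have "d2 s = Gfun \<Omega> h0 F (eta s) (d1 s)" using ode s(1) by (simp add: ode_sol_def)
    also have "Gfun \<Omega> h0 F (eta s) (d1 s) = - F"
      using assms(8) closure_subset V1_upper V1_pos s(2) \<open>0 < eta s\<close>
      by (intro Gfun_eq_neg[OF assms(1,2,5,6,7)]) force+
    finally show "d2 s < 0" using assms(10) by simp
  qed (use ode in \<open>auto simp: ode_sol_def Ival_def zero_ereal_def[symmetric]\<close>)
qed

end
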